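(* Let $X=[0,1]^{\mathbb N_0}$ with the shift $\sigma$, let $h\in C^2([0,1]^2;\mathbb R)$ satisfy $D_2D_1h<0$ on $[0,1]^2$, and let $\varphi:X\to\mathbb R$ be given by $\varphi(\underline{x})=h(x_0,x_1)$. Then \[\mathscr{M}_\varphi=\Omega_\varphi=\bigcup_{a\in\mathrm{m}_h}\{a^\infty\}.\]
   Context: $X=[0,1]^{\mathbb N_0}$ carries the metric $d_X(\underline{x},\underline{y})=\sum_{i\ge0}|x_i-y_i|/2^{i+1}$, and $\sigma(\underline{x})_i=x_{i+1}$. For Lipschitz $\varphi:X\to\mathbb R$, $\alpha_\varphi=\inf_\mu\int\varphi\,d\mu$, the infimum over $\sigma$-invariant Borel probability measures; a measure attaining it is called minimizing, and the Mather set $\mathscr{M}_\varphi$ is the union of the supports of all minimizing measures. For $\underline{x},\underline{y}\in X$, $n\in\mathbb N$, $\varepsilon>0$ let $B(\underline{x},\underline{y},n;\varepsilon)=\{\underline{z}\in X: d_X(\underline{x},\underline{z})<\varepsilon,\ d_X(\sigma^n\underline{z},\underline{y})<\varepsilon\}$, $S_\varphi(\underline{x},\underline{y};\varepsilon)=\inf\{\sum_{i=0}^{n-1}(\varphi(\sigma^i\underline{z})-\alpha_\varphi): n\in\mathbb N,\ \underline{z}\in B(\underline{x},\underline{y},n;\varepsilon)\}$ and $S_\varphi(\underline{x},\underline{y})=\lim_{\varepsilon\to0}S_\varphi(\underline{x},\underline{y};\varepsilon)$ (the Mañé potential). The Aubry set is $\Omega_\varphi=\{\underline{x}\in X: S_\varphi(\underline{x},\underline{x})=0\}$.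 For $h:[0,1]^2\to\mathbb R$ continuous, $h^*=\min_{x\in[0,1]}h(x,x)$ and $\mathrm{m}_h=\{a\in[0,1]: h(a,a)=h^*\}$; $a^\infty$ denotes the constant sequence $aaa\ldots$. $D_i$ denotes the partial derivative in the $i$-th variable. *)

theory Defs
  imports "HOL-Analysis.Analysis" "HOL-Probability.Probability"
begin

text \<open>The space X = [0,1]^N0, realised as a subset of nat => real (product topology).\<close>
definition Xs :: "(nat \<Rightarrow> real) set" where
  "Xs = {x. \<forall>i. x i \<in> {0..1}}"

definition dX :: "(nat \<Rightarrow> real) \<Rightarrow> (nat \<Rightarrow> real) \<Rightarrow> real" where
  "dX x y = (\<Sum>i. \<bar>x i - y i\<bar> / 2 ^ (Suc i))"

definition shift :: "(nat \<Rightarrow> real) \<Rightarrow> (nat \<Rightarrow> real)" where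
  "shift x = (\<lambda>i. x (Suc i))"

text \<open>Shift-invariant Borel probability measures on X (measures on the Borel sets of
  nat => real concentrated on the closed set X).\<close>
definition invariant_prob :: "(nat \<Rightarrow> real) measure \<Rightarrow> bool" where
  "invariant_prob M \<longleftrightarrow> prob_space M \<and> sets M = sets borel \<and> emeasure M Xs = 1 \<and>
     (\<forall>A\<in>sets borel. emeasure M (shift -` A) = emeasure M A)"

definition pint :: "((nat \<Rightarrow> real) \<Rightarrow> real) \<Rightarrow> (nat \<Rightarrow> real) measure \<Rightarrow> real" where
  "pint \<phi> M = (LINT x:Xs|M. \<phi> x)"

definition alpha :: "((nat \<Rightarrow> real) \<Rightarrow> real) \<Rightarrow> real" where
  "alpha \<phi> = Inf {pint \<phi> M | M. invariant_prob M}"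

definition minimizing :: "((nat \<Rightarrow> real) \<Rightarrow> real) \<Rightarrow> (nat \<Rightarrow> real) measure \<Rightarrow> bool" where
  "minimizing \<phi> M \<longleftrightarrow> invariant_prob M \<and> pint \<phi> M = alpha \<phi>"

definition supp :: "(nat \<Rightarrow> real) measure \<Rightarrow> (nat \<Rightarrow> real) set" where
  "supp M = {x \<in> Xs. \<forall>\<epsilon>>0. emeasure M {z \<in> Xs. dX x z < \<epsilon>} > 0}"

definition Mather :: "((nat \<Rightarrow> real) \<Rightarrow> real) \<Rightarrow> (nat \<Rightarrow> real) set" where
  "Mather \<phi> = \<Union> {supp M | M. minimizing \<phi> M}"

definition Bset :: "(nat \<Rightarrow> real) \<Rightarrow> (nat \<Rightarrow> real) \<Rightarrow> nat \<Rightarrow> real \<Rightarrow> (nat \<Rightarrow> real) set" where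
  "Bset x y n \<epsilon> = {z \<in> Xs. dX x z < \<epsilon> \<and> dX ((shift ^^ n) z) y < \<epsilon>}"

definition Seps :: "((nat \<Rightarrow> real) \<Rightarrow> real) \<Rightarrow> (nat \<Rightarrow> real) \<Rightarrow> (nat \<Rightarrow> real) \<Rightarrow> real \<Rightarrow> ereal" where
  "Seps \<phi> x y \<epsilon> = Inf {ereal (\<Sum>i<n. \<phi> ((shift ^^ i) z) - alpha \<phi>) | n z. n \<ge> 1 \<and> z \<in> Bset x y n \<epsilon>}"

definition Mane :: "((nat \<Rightarrow> real) \<Rightarrow> real) \<Rightarrow> (nat \<Rightarrow> real) \<Rightarrow> (nat \<Rightarrow> real) \<Rightarrow> ereal" where
  "Mane \<phi> x y = Lim (at_right 0) (\<lambda>\<epsilon>. Seps \<phi> x y \<epsilon>)"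

definition Aubry :: "((nat \<Rightarrow> real) \<Rightarrow> real) \<Rightarrow> (nat \<Rightarrow> real) set" where
  "Aubry \<phi> = {x \<in> Xs. Mane \<phi> x x = 0}"

definition hstar :: "(real \<Rightarrow> real \<Rightarrow> real) \<Rightarrow> real" where
  "hstar h = Inf ((\<lambda>x. h x x) ` {0..1})"

definition mh :: "(real \<Rightarrow> real \<Rightarrow> real) \<Rightarrow> real set" where
  "mh h = {a \<in> {0..1}. h a a = hstar h}"

text \<open>h is C^2 on the closed square [0,1]^2, with partial derivatives (one-sided at the
  boundary) d1 = D_1 h, d2 = D_2 h, d11 = D_1 D_1 h, d12 = D_2 D_1 h, d21 = D_1 D_2 h,
  d22 = D_2 D_2 h, all continuous on the square.\<close>
definition C2_square ::
  "(real \<Rightarrow> real \<Rightarrow> real) \<Rightarrow> (real \<Rightarrow> real \<Rightarrow> real) \<Rightarrow> (real \<Rightarrow> real \<Rightarrow> real) \<Rightarrow>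
   (real \<Rightarrow> real \<Rightarrow> real) \<Rightarrow> (real \<Rightarrow> real \<Rightarrow> real) \<Rightarrow> (real \<Rightarrow> real \<Rightarrow> real) \<Rightarrow>
   (real \<Rightarrow> real \<Rightarrow> real) \<Rightarrow> bool" where
  "C2_square h d1 d2 d11 d12 d21 d22 \<longleftrightarrow>
     (\<forall>x\<in>{0..1}. \<forall>y\<in>{0..1}.
        ((\<lambda>t. h t y) has_real_derivative d1 x y) (at x within {0..1}) \<and>
        ((\<lambda>t. h x t) has_real_derivative d2 x y) (at y within {0..1}) \<and>
        ((\<lambda>t. d1 t y) has_real_derivative d11 x y) (at x within {0..1}) \<and>
        ((\<lambda>t. d1 x t) has_real_derivative d12 x y) (at y within {0..1}) \<and>
        ((\<lambda>t. d2 t y) has_real_derivative d21 x y) (at x within {0..1}) \<and>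
        ((\<lambda>t. d2 x t) has_real_derivative d22 x y) (at y within {0..1})) \<and>
     continuous_on ({0..1} \<times> {0..1}) (case_prod h) \<and>
     continuous_on ({0..1} \<times> {0..1}) (case_prod d1) \<and>
     continuous_on ({0..1} \<times> {0..1}) (case_prod d2) \<and>
     continuous_on ({0..1} \<times> {0..1}) (case_prod d11) \<and>
     continuous_on ({0..1} \<times> {0..1}) (case_prod d12) \<and>
     continuous_on ({0..1} \<times> {0..1}) (case_prod d21) \<and>
     continuous_on ({0..1} \<times> {0..1}) (case_prod d22)"

end

theory Submission
  imports Defs
begin

(* Since D_2 D_1 h <= -c < 0, the function u(t) = - int_0^t D_1 h(s,s) ds is a strict subaction:
     h(x,y) - h(y,y) + u(x) - u(y) >= c/2 (x - y)^2.
   So phi - h^* differs by a coboundary from the cost h(x_0,x_1) - h^* + u(x_0) - u(x_1), which dominates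
   the defect h(x_1,x_1) - h^* + c/2 (x_0 - x_1)^2 >= 0, and the defect vanishes exactly at the pairs (a,a)
   with a in m_h. Integrating, alpha = h^*, attained by the Dirac measures at the fixed points a^oo; a
   minimizing measure makes every defect(x_k, x_(k+1)) vanish on its support, which therefore consists of
   these fixed points. On the Aubry side, the action of an orbit segment from near x back to near x is its
   total cost up to a Lipschitz error in u. If x is not such a fixed point, let k be the first index with a
   positive defect: a segment of length > k pays about that defect, and a shorter one cannot return,
   because x is constant up to index k while x_(k+1) differs from x_k. *)

section \<open>The twist inequality\<close>

lemma mvt_within_subinterval:
  fixes f f' :: "real \<Rightarrow> real"
  assumes "a \<le> b" "{a..b} \<subseteq> S"
    and "\<And>x. x \<in> S \<Longrightarrow> (f has_real_derivative f' x) (at x within S)"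
  shows "\<exists>\<xi>\<in>{a..b}. f b - f a = f' \<xi> * (b - a)"
proof -
  have "\<exists>\<xi>\<in>{a..b}. f b - f a = (\<lambda>d. f' \<xi> * d) (b - a)"
  proof (rule mvt_very_simple[OF assms(1)])
    fix x assume "a \<le> x" "x \<le> b"
    then show "(f has_derivative (\<lambda>d. f' x * d)) (at x within {a..b})"
      using assms(2,3) has_field_derivative_subset
      by (fastforce simp: has_field_derivative_def[symmetric])
  qed
  then show ?thesis by simp
qed

lemma continuous_on_diagonal:
  assumes "continuous_on (S \<times> S) (case_prod f)"
  shows "continuous_on S (\<lambda>t. f t t)"
proof -
  have "continuous_on S (\<lambda>t. case_prod f (t, t))"
    by (rule continuous_on_compose2[OF assms]) (auto intro!: continuous_intros)
  then show ?thesis by simp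
qed

lemma deriv_le_imp_decrease_bound:
  fixes f f' :: "real \<Rightarrow> real"
  assumes S: "is_interval S"
    and f: "\<And>s. s \<in> S \<Longrightarrow> (f has_real_derivative f' s) (at s within S)"
    and f'_le: "\<And>s. s \<in> S \<Longrightarrow> f' s \<le> - c"
    and "s\<^sub>1 \<in> S" "s\<^sub>2 \<in> S" "s\<^sub>1 \<le> s\<^sub>2"
  shows "f s\<^sub>2 - f s\<^sub>1 \<le> - c * (s\<^sub>2 - s\<^sub>1)"
proof -
  have sub: "{s\<^sub>1..s\<^sub>2} \<subseteq> S"
    using S \<open>s\<^sub>1 \<in> S\<close> \<open>s\<^sub>2 \<in> S\<close> unfolding is_interval_1 by (meson atLeastAtMost_iff subsetI)
  obtain \<xi> where "\<xi> \<in> {s\<^sub>1..s\<^sub>2}" and \<xi>: "f s\<^sub>2 - f s\<^sub>1 = f' \<xi> * (s\<^sub>2 - s\<^sub>1)"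
    using mvt_within_subinterval[OF \<open>s\<^sub>1 \<le> s\<^sub>2\<close> sub f] by blast
  have "f' \<xi> * (s\<^sub>2 - s\<^sub>1) \<le> - c * (s\<^sub>2 - s\<^sub>1)"
    using f'_le[of \<xi>] sub \<open>\<xi> \<in> {s\<^sub>1..s\<^sub>2}\<close> \<open>s\<^sub>1 \<le> s\<^sub>2\<close> by (intro mult_right_mono) auto
  with \<xi> show ?thesis by simp
qed

lemma twist_subaction_inequality:
  fixes h d1 d12 :: "real \<Rightarrow> real \<Rightarrow> real" and u :: "real \<Rightarrow> real"
  assumes S: "is_interval S"
    and hd1: "\<And>x y. x \<in> S \<Longrightarrow> y \<in> S \<Longrightarrow> ((\<lambda>t. h t y) has_real_derivative d1 x y) (at x within S)"
    and d1d2: "\<And>x y. x \<in> S \<Longrightarrow> y \<in> S \<Longrightarrow> ((\<lambda>t. d1 x t) has_real_derivative d12 x y) (at y within S)"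
    and twist: "\<And>x y. x \<in> S \<Longrightarrow> y \<in> S \<Longrightarrow> d12 x y \<le> - c"
    and du: "\<And>t. t \<in> S \<Longrightarrow> (u has_real_derivative - d1 t t) (at t within S)"
    and x: "x \<in> S" and y: "y \<in> S"
  shows "c / 2 * (x - y)\<^sup>2 \<le> h x y - h y y + u x - u y"
proof -
  have sub: "{a..b} \<subseteq> S" if "a \<in> S" "b \<in> S" for a b
    using S that unfolding is_interval_1 by (meson atLeastAtMost_iff subsetI)
  have d1_decrease: "d1 t s\<^sub>2 - d1 t s\<^sub>1 \<le> - c * (s\<^sub>2 - s\<^sub>1)"
    if "t \<in> S" "s\<^sub>1 \<in> S" "s\<^sub>2 \<in> S" "s\<^sub>1 \<le> s\<^sub>2" for t s\<^sub>1 s\<^sub>2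
    using deriv_le_imp_decrease_bound[OF S d1d2[OF \<open>t \<in> S\<close>] twist[OF \<open>t \<in> S\<close>] that(2-4)] .
  define g where "g t = h t y - h y y + u t - u y - c / 2 * (t - y)\<^sup>2" for t
  have dg: "(g has_real_derivative d1 t y - d1 t t - c * (t - y)) (at t within S)"
    if "t \<in> S" for t
    unfolding g_def
    by (rule derivative_eq_intros hd1[OF that y] du[OF that] refl)+ (simp add: algebra_simps)
  have "g y \<le> g x"
  proof (cases "x \<le> y")
    case True
    then obtain \<xi> where "\<xi> \<in> {x..y}"
      and \<xi>: "g y - g x = (d1 \<xi> y - d1 \<xi> \<xi> - c * (\<xi> - y)) * (y - x)"
      using mvt_within_subinterval[OF True sub[OF x y] dg] by blast
    moreover have "\<xi> \<in> S"
      using sub[OF x y] \<open>\<xi> \<in> {x..y}\<close> by blast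
    ultimately have "d1 \<xi> y - d1 \<xi> \<xi> - c * (\<xi> - y) \<le> 0"
      using d1_decrease[of \<xi> \<xi> y] y by (simp add: algebra_simps)
    then have "g y - g x \<le> 0"
      using \<xi> True by (simp add: mult_nonpos_nonneg)
    then show ?thesis by simp
  next
    case False
    then obtain \<xi> where "\<xi> \<in> {y..x}"
      and \<xi>: "g x - g y = (d1 \<xi> y - d1 \<xi> \<xi> - c * (\<xi> - y)) * (x - y)"
      using mvt_within_subinterval[OF _ sub[OF y x] dg] by fastforce
    moreover have "\<xi> \<in> S"
      using sub[OF y x] \<open>\<xi> \<in> {y..x}\<close> by blast
    ultimately have "0 \<le> d1 \<xi> y - d1 \<xi> \<xi> - c * (\<xi> - y)"
      using d1_decrease[of \<xi> y \<xi>] y by (simp add: algebra_simps)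
    then have "0 \<le> g x - g y"
      using \<xi> False by simp
    then show ?thesis by simp
  qed
  then show ?thesis by (simp add: g_def)
qed

section \<open>The shift space\<close>

lemma funpow_shift_apply: "(shift ^^ n) z i = z (n + i)"
  by (induction n arbitrary: i) (auto simp: shift_def)

lemma Xs_coordinate: "x \<in> Xs \<Longrightarrow> x i \<in> {0..1}"
  by (simp add: Xs_def)

lemma funpow_shift_Xs: "z \<in> Xs \<Longrightarrow> (shift ^^ n) z \<in> Xs"
  by (simp add: Xs_def funpow_shift_apply)

lemma const_Xs_iff: "(\<lambda>_. a) \<in> Xs \<longleftrightarrow> a \<in> {0..1}"
  by (simp add: Xs_def)

lemma shift_const [simp]: "shift (\<lambda>_. a) = (\<lambda>_. a)"
  by (simp add: shift_def)

lemma dX_self [simp]: "dX x x = 0"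
  by (simp add: dX_def)

lemma summable_dX:
  assumes "x \<in> Xs" "z \<in> Xs"
  shows "summable (\<lambda>i. \<bar>x i - z i\<bar> / 2 ^ Suc i)"
proof (rule summable_comparison_test)
  have "\<bar>x i - z i\<bar> \<le> 1" for i
    using Xs_coordinate[OF assms(1), of i] Xs_coordinate[OF assms(2), of i] by auto
  then show "\<exists>N. \<forall>i\<ge>N. norm (\<bar>x i - z i\<bar> / 2 ^ Suc i) \<le> (1 / 2) ^ Suc i"
    by (auto simp: power_one_over divide_right_mono)
  show "summable (\<lambda>i. (1 / 2 :: real) ^ Suc i)"
    using summable_geometric[of "1 / 2 :: real"] by (simp add: summable_Suc_iff)
qed

lemma coordinate_dist_le_dX:
  assumes "x \<in> Xs" "z \<in> Xs"
  shows "\<bar>x i - z i\<bar> \<le> 2 ^ Suc i * dX x z"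
proof -
  have "\<bar>x i - z i\<bar> / 2 ^ Suc i \<le> dX x z"
    unfolding dX_def using sum_le_suminf[OF summable_dX[OF assms], of "{i}"] by auto
  then show ?thesis by (simp add: field_simps)
qed

lemma Bset_coordinates:
  assumes "x \<in> Xs" "y \<in> Xs" "z \<in> Bset x y n e"
  shows "z \<in> Xs" "\<bar>z i - x i\<bar> < 2 ^ Suc i * e" "\<bar>z (n + i) - y i\<bar> < 2 ^ Suc i * e"
proof -
  show z: "z \<in> Xs" using assms(3) by (simp add: Bset_def)
  have "\<bar>x i - z i\<bar> \<le> 2 ^ Suc i * dX x z" by (rule coordinate_dist_le_dX[OF assms(1) z])
  also have "\<dots> < 2 ^ Suc i * e" using assms(3) by (simp add: Bset_def)
  finally show "\<bar>z i - x i\<bar> < 2 ^ Suc i * e" by simp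
  have "\<bar>(shift ^^ n) z i - y i\<bar> \<le> 2 ^ Suc i * dX ((shift ^^ n) z) y"
    by (rule coordinate_dist_le_dX[OF funpow_shift_Xs[OF z] assms(2)])
  also have "\<dots> < 2 ^ Suc i * e" using assms(3) by (simp add: Bset_def)
  finally show "\<bar>z (n + i) - y i\<bar> < 2 ^ Suc i * e" by (simp add: funpow_shift_apply)
qed

lemma continuous_on_square_dX:
  fixes f :: "real \<Rightarrow> real \<Rightarrow> real"
  assumes f: "continuous_on ({0..1} \<times> {0..1}) (case_prod f)" and x: "x \<in> Xs" and "0 < e"
  shows "\<exists>\<delta>>0. \<forall>z\<in>Xs. dX x z < \<delta> \<longrightarrow> \<bar>f (z i) (z j) - f (x i) (x j)\<bar> < e"
proof -
  obtain d where "0 < d" and d: "\<And>p. p \<in> {0..1} \<times> {0..1} \<Longrightarrow> dist p (x i, x j) < d \<Longrightarrow>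
      dist (case_prod f p) (f (x i) (x j)) < e"
    using f \<open>0 < e\<close> Xs_coordinate[OF x] unfolding continuous_on_iff
    by (metis case_prod_conv mem_Sigma_iff)
  define \<delta> where "\<delta> = min (d / 2 ^ (i + 2)) (d / 2 ^ (j + 2))"
  have close: "\<bar>z k - x k\<bar> < d / 2" if "z \<in> Xs" "dX x z < d / 2 ^ (k + 2)" for z k
  proof -
    have "\<bar>x k - z k\<bar> \<le> 2 ^ Suc k * dX x z" by (rule coordinate_dist_le_dX[OF x that(1)])
    also have "\<dots> < 2 ^ Suc k * (d / 2 ^ (k + 2))"
      using that(2) by (intro mult_strict_left_mono) auto
    also have "\<dots> = d / 2" by (simp add: field_simps)
    finally show ?thesis by (simp add: abs_minus_commute)
  qed
  show ?thesis
  proof (intro exI[of _ \<delta>] conjI ballI impI)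
    show "0 < \<delta>" using \<open>0 < d\<close> by (simp add: \<delta>_def)
    fix z assume "z \<in> Xs" "dX x z < \<delta>"
    then have "\<bar>z i - x i\<bar> < d / 2" "\<bar>z j - x j\<bar> < d / 2"
      using close by (auto simp: \<delta>_def)
    then have "dist (z i, z j) (x i, x j) < d"
      using sqrt_sum_squares_le_sum_abs[of "z i - x i" "z j - x j"]
      by (simp add: dist_Pair_Pair dist_real_def)
    then show "\<bar>f (z i) (z j) - f (x i) (x j)\<bar> < e"
      using d[of "(z i, z j)"] Xs_coordinate[OF \<open>z \<in> Xs\<close>] by (simp add: dist_real_def)
  qed
qed

section \<open>Invariant measures\<close>

lemma coordinate_borel [measurable]: "(\<lambda>z :: nat \<Rightarrow> real. z i) \<in> borel_measurable borel"
  by (intro borel_measurable_continuous_onI continuous_on_product_coordinates)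

lemma Xs_borel [measurable]: "Xs \<in> sets borel"
proof -
  have "Xs = (\<Inter>i. (\<lambda>x. x i) -` {0..1})" by (auto simp: Xs_def)
  moreover have "closed ((\<lambda>x :: nat \<Rightarrow> real. x i) -` {0..1})" for i
    by (rule closed_vimage[OF closed_atLeastAtMost continuous_on_product_coordinates])
  ultimately show ?thesis by (metis borel_closed closed_INT)
qed

lemma shift_borel [measurable]: "shift \<in> borel_measurable borel"
  unfolding shift_def
  by (intro borel_measurable_continuous_onI continuous_on_coordinatewise_then_product
      continuous_on_product_coordinates)

lemma funpow_shift_borel: "(shift ^^ k) \<in> borel_measurable borel"
  by (induction k) (auto intro: measurable_comp[OF _ shift_borel])

lemma dX_borel [measurable]: "dX x \<in> borel_measurable borel"
  unfolding dX_def by measurable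

lemma dX_ball_borel [measurable]: "{z \<in> Xs. dX x z < e} \<in> sets borel"
proof -
  have "{z \<in> Xs. dX x z < e} = {z \<in> space borel. z \<in> Xs \<and> dX x z < e}" by simp
  also have "\<dots> \<in> sets borel" by measurable
  finally show ?thesis .
qed

lemma invariant_prob_space_UNIV: "invariant_prob M \<Longrightarrow> space M = UNIV"
  using sets_eq_imp_space_eq[of M borel] by (simp add: invariant_prob_def)

lemma invariant_prob_measurable: "invariant_prob M \<Longrightarrow> g \<in> borel \<rightarrow>\<^sub>M N \<Longrightarrow> g \<in> M \<rightarrow>\<^sub>M N"
  using measurable_cong_sets[of M borel N N] by (simp add: invariant_prob_def)

lemma invariant_prob_AE_Xs:
  assumes "invariant_prob M"
  shows "AE x in M. x \<in> Xs"
proof -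
  interpret prob_space M using assms by (simp add: invariant_prob_def)
  show ?thesis using assms by (intro AE_prob_1) (simp add: invariant_prob_def measure_def)
qed

lemma invariant_prob_integral_funpow_shift:
  fixes g :: "(nat \<Rightarrow> real) \<Rightarrow> real"
  assumes M: "invariant_prob M" and g: "g \<in> borel_measurable borel"
  shows "(\<integral>x. g ((shift ^^ k) x) \<partial>M) = (\<integral>x. g x \<partial>M)"
proof -
  have sets: "sets M = sets borel" using M by (simp add: invariant_prob_def)
  have shift_M: "shift \<in> measurable M borel"
    using invariant_prob_measurable[OF M shift_borel] .
  have distr: "distr M borel shift = M"
  proof (rule measure_eqI)
    fix A assume "A \<in> sets (distr M borel shift)"
    then show "emeasure (distr M borel shift) A = emeasure M A"
      using M shift_M by (simp add: emeasure_distr invariant_prob_def invariant_prob_space_UNIV)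
  qed (simp add: sets)
  show ?thesis
  proof (induction k)
    case (Suc k)
    have "(\<lambda>x. g ((shift ^^ k) x)) \<in> borel_measurable borel"
      using measurable_comp[OF funpow_shift_borel g] by (simp add: o_def)
    then have "(\<integral>x. g ((shift ^^ k) (shift x)) \<partial>M) = (\<integral>x. g ((shift ^^ k) x) \<partial>distr M borel shift)"
      by (rule integral_distr[OF shift_M, symmetric])
    with Suc distr show ?case by (simp add: funpow_Suc_right del: funpow.simps)
  qed simp
qed

lemma invariant_prob_return_const:
  assumes "a \<in> {0..1}"
  shows "invariant_prob (return borel (\<lambda>_. a))"
  unfolding invariant_prob_def
proof (intro conjI ballI)
  show "prob_space (return borel (\<lambda>_. a))" by (rule prob_space_return) simp
  show "emeasure (return borel (\<lambda>_. a)) Xs = 1" using assms by (simp add: const_Xs_iff)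
  fix A :: "(nat \<Rightarrow> real) set" assume "A \<in> sets borel"
  then show "emeasure (return borel (\<lambda>_. a)) (shift -` A) = emeasure (return borel (\<lambda>_. a)) A"
    using measurable_sets[OF shift_borel \<open>A \<in> sets borel\<close>] by (simp add: indicator_def)
qed simp

lemma supp_return: "x \<in> Xs \<Longrightarrow> x \<in> supp (return borel x)"
  by (simp add: supp_def emeasure_return[OF dX_ball_borel])

lemma AE_zero_on_supp:
  fixes g :: "(nat \<Rightarrow> real) \<Rightarrow> real"
  assumes sets: "sets M = sets borel" and g: "AE z in M. g z = 0" and x: "x \<in> supp M"
    and cont: "\<And>e. 0 < e \<Longrightarrow> \<exists>\<delta>>0. \<forall>z\<in>Xs. dX x z < \<delta> \<longrightarrow> \<bar>g z - g x\<bar> < e"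
  shows "g x = 0"
proof (rule ccontr)
  assume "g x \<noteq> 0"
  then obtain \<delta> where "0 < \<delta>" and near: "\<forall>z\<in>Xs. dX x z < \<delta> \<longrightarrow> \<bar>g z - g x\<bar> < \<bar>g x\<bar>"
    using cont[of "\<bar>g x\<bar>"] by auto
  let ?B = "{z \<in> Xs. dX x z < \<delta>}"
  have "AE z in M. z \<notin> ?B"
    using g by eventually_elim (use near in force)
  moreover have "?B \<in> sets M"
    using sets by simp
  ultimately have "emeasure M ?B = 0"
    using AE_iff_null_sets[of ?B M] by blast
  moreover have "0 < emeasure M ?B"
    using x \<open>0 < \<delta>\<close> by (simp add: supp_def)
  ultimately show False by simp
qed

(* Clamping the coordinates into [0,1] makes an observable of two coordinates continuous on all of
   nat => real, hence Borel measurable, without changing it on Xs. *)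
definition clamp01 :: "real \<Rightarrow> real" where
  "clamp01 t = max 0 (min 1 t)"

definition pair_obs :: "(real \<Rightarrow> real \<Rightarrow> real) \<Rightarrow> nat \<Rightarrow> (nat \<Rightarrow> real) \<Rightarrow> real" where
  "pair_obs f k x = f (clamp01 (x k)) (clamp01 (x (Suc k)))"

lemma clamp01_in: "clamp01 t \<in> {0..1}"
  by (simp add: clamp01_def)

lemma pair_obs_Xs: "x \<in> Xs \<Longrightarrow> pair_obs f k x = f (x k) (x (Suc k))"
  by (simp add: pair_obs_def clamp01_def Xs_def)

lemma pair_obs_funpow_shift: "pair_obs f 0 ((shift ^^ k) x) = pair_obs f k x"
  by (simp add: pair_obs_def funpow_shift_apply)

lemma borel_measurable_pair_obs:
  assumes "continuous_on ({0..1} \<times> {0..1}) (case_prod f)"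
  shows "pair_obs f k \<in> borel_measurable borel"
proof -
  have clamp: "continuous_on UNIV (\<lambda>x :: nat \<Rightarrow> real. clamp01 (x i))" for i
    unfolding clamp01_def by (intro continuous_intros continuous_on_product_coordinates)
  have "continuous_on UNIV (\<lambda>x. case_prod f (clamp01 (x k), clamp01 (x (Suc k))))"
    by (rule continuous_on_compose2[OF assms]) (auto intro!: continuous_intros clamp simp: clamp01_def)
  then show ?thesis
    unfolding pair_obs_def[abs_def] by (simp add: borel_measurable_continuous_onI)
qed

lemma integrable_pair_obs:
  assumes f: "continuous_on ({0..1} \<times> {0..1}) (case_prod f)"
    and M: "finite_measure M" "sets M = sets borel"
  shows "integrable M (pair_obs f k)"
proof -
  obtain B where B: "\<And>p. p \<in> {0..1} \<times> {0..1} \<Longrightarrow> norm (case_prod f p) \<le> B"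
    using compact_imp_bounded[OF compact_continuous_image[OF f compact_Times[OF compact_Icc compact_Icc]]]
    by (auto simp: bounded_iff)
  have "norm (pair_obs f k x) \<le> B" for x
    using B[of "(clamp01 (x k), clamp01 (x (Suc k)))"] clamp01_in by (simp add: pair_obs_def)
  moreover have "pair_obs f k \<in> borel_measurable M"
    using borel_measurable_pair_obs[OF f] measurable_cong_sets[OF M(2) refl] by blast
  ultimately show ?thesis
    by (intro finite_measure.integrable_const_bound[OF M(1), where B = B]) auto
qed

lemma invariant_prob_integral_pair_obs:
  assumes "invariant_prob M" "continuous_on ({0..1} \<times> {0..1}) (case_prod f)"
  shows "(\<integral>x. pair_obs f k x \<partial>M) = (\<integral>x. pair_obs f 0 x \<partial>M)"
  using invariant_prob_integral_funpow_shift[OF assms(1) borel_measurable_pair_obs[OF assms(2), of 0], of k]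
  by (simp add: pair_obs_funpow_shift)

lemma pint_eq_integral_pair_obs:
  assumes M: "invariant_prob M" and f: "continuous_on ({0..1} \<times> {0..1}) (case_prod f)"
  shows "pint (\<lambda>x. f (x 0) (x 1)) M = (\<integral>x. pair_obs f 0 x \<partial>M)"
  unfolding pint_def set_lebesgue_integral_def
proof (rule integral_cong_AE)
  show "pair_obs f 0 \<in> borel_measurable M"
    by (rule invariant_prob_measurable[OF M borel_measurable_pair_obs[OF f]])
  then show "(\<lambda>x. indicator Xs x *\<^sub>R f (x 0) (x 1)) \<in> borel_measurable M"
    using M by (subst measurable_cong[where g = "\<lambda>x. indicator Xs x * pair_obs f 0 x"])
      (auto simp: pair_obs_Xs indicator_def invariant_prob_def)
  show "AE x in M. indicator Xs x *\<^sub>R f (x 0) (x 1) = pair_obs f 0 x"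
    using invariant_prob_AE_Xs[OF M] by eventually_elim (simp add: pair_obs_Xs)
qed

lemma pint_return_const:
  assumes "a \<in> {0..1}" and f: "continuous_on ({0..1} \<times> {0..1}) (case_prod f)"
  shows "pint (\<lambda>x. f (x 0) (x 1)) (return borel (\<lambda>_. a)) = f a a"
proof -
  have "pint (\<lambda>x. f (x 0) (x 1)) (return borel (\<lambda>_. a)) = (\<integral>x. pair_obs f 0 x \<partial>return borel (\<lambda>_. a))"
    by (rule pint_eq_integral_pair_obs[OF invariant_prob_return_const[OF assms(1)] f])
  also have "\<dots> = pair_obs f 0 (\<lambda>_. a)"
    by (rule integral_return) (simp_all add: borel_measurable_pair_obs[OF f])
  also have "\<dots> = f a a"
    using assms(1) by (simp add: pair_obs_Xs const_Xs_iff)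
  finally show ?thesis .
qed

section \<open>Returning orbit segments\<close>

lemma Seps_antimono:
  assumes "0 < a" "a \<le> b"
  shows "Seps \<phi> x y b \<le> Seps \<phi> x y a"
  unfolding Seps_def Bset_def using assms by (intro Inf_superset_mono) force

lemma Mane_tendsto: "((\<lambda>e. Seps \<phi> x y e) \<longlongrightarrow> Mane \<phi> x y) (at_right 0)"
proof -
  have lim: "((\<lambda>e. Seps \<phi> x y e) \<longlongrightarrow> (SUP e\<in>{0<..}. Seps \<phi> x y e)) (at_right 0)"
  proof (rule increasing_tendsto)
    show "\<forall>\<^sub>F e in at_right 0. Seps \<phi> x y e \<le> (SUP e\<in>{0<..}. Seps \<phi> x y e)"
      using eventually_at_right_less[of "0 :: real"] by eventually_elim (auto intro: SUP_upper)
    fix l assume "l < (SUP e\<in>{0<..}. Seps \<phi> x y e)"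
    then obtain e where "0 < e" and e: "l < Seps \<phi> x y e" by (auto simp: less_SUP_iff)
    show "\<forall>\<^sub>F e' in at_right 0. l < Seps \<phi> x y e'"
      using eventually_at_right_real[OF \<open>0 < e\<close>]
    proof eventually_elim
      case (elim e')
      then have "Seps \<phi> x y e \<le> Seps \<phi> x y e'" by (intro Seps_antimono) auto
      with e show ?case by (rule less_le_trans)
    qed
  qed
  then have "Mane \<phi> x y = (SUP e\<in>{0<..}. Seps \<phi> x y e)"
    unfolding Mane_def by (rule tendsto_Lim[OF trivial_limit_at_right_real])
  with lim show ?thesis by simp
qed

lemma Bset_short_return:
  assumes x: "x \<in> Xs" and const: "\<And>j. j \<le> k \<Longrightarrow> x j = x k"
    and n: "1 \<le> n" "n \<le> k" and z: "z \<in> Bset x x n e"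
  shows "\<bar>x (Suc k) - x k\<bar> < 2 ^ (k + 3) * e"
proof -
  \<comment> \<open>z (k+1) is close to x (k+1), and also, as a coordinate of the returned point, to x (k+1-n) = x k.\<close>
  define i where "i = Suc k - n"
  have "i \<le> k" "n + i = Suc k" using n by (auto simp: i_def)
  have returned: "\<bar>z (Suc k) - x k\<bar> < 2 ^ Suc i * e"
    using Bset_coordinates(3)[OF x x z, of i] const[OF \<open>i \<le> k\<close>] \<open>n + i = Suc k\<close> by simp
  then have "0 < 2 ^ Suc i * e"
    by (meson abs_ge_zero le_less_trans)
  then have "0 < e"
    by (simp add: zero_less_mult_iff)
  have "2 ^ Suc i * e \<le> 2 ^ Suc k * e"
    using \<open>i \<le> k\<close> \<open>0 < e\<close> by (intro mult_right_mono power_increasing) auto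
  moreover have "\<bar>z (Suc k) - x (Suc k)\<bar> < 2 ^ Suc (Suc k) * e"
    by (rule Bset_coordinates(2)[OF x x z])
  moreover have "\<bar>x (Suc k) - x k\<bar> \<le> \<bar>z (Suc k) - x k\<bar> + \<bar>z (Suc k) - x (Suc k)\<bar>"
    by arith
  moreover have "0 < 2 ^ k * e" "2 ^ Suc k * e = 2 * (2 ^ k * e)"
    "2 ^ Suc (Suc k) * e = 4 * (2 ^ k * e)" "2 ^ (k + 3) * e = 8 * (2 ^ k * e)"
    using \<open>0 < e\<close> by (simp_all add: power_add)
  ultimately show ?thesis
    using returned by linarith
qed

section \<open>Strict subactions\<close>

locale strict_subaction =
  fixes h :: "real \<Rightarrow> real \<Rightarrow> real" and u :: "real \<Rightarrow> real" and c B :: real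
  assumes h_continuous: "continuous_on ({0..1} \<times> {0..1}) (case_prod h)"
    and u_lipschitz: "\<And>a b. a \<in> {0..1} \<Longrightarrow> b \<in> {0..1} \<Longrightarrow> \<bar>u a - u b\<bar> \<le> B * \<bar>a - b\<bar>"
    and c_pos: "0 < c"
    and subaction: "\<And>x y. x \<in> {0..1} \<Longrightarrow> y \<in> {0..1} \<Longrightarrow>
      c / 2 * (x - y)\<^sup>2 \<le> h x y - h y y + u x - u y"
begin

abbreviation \<phi> :: "(nat \<Rightarrow> real) \<Rightarrow> real" where
  "\<phi> \<equiv> \<lambda>x. h (x 0) (x 1)"

lemma B_nonneg: "0 \<le> B"
  using u_lipschitz[of 0 1] abs_ge_zero[of "u 0 - u 1"] by simp

lemma u_continuous: "continuous_on {0..1} u"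
proof (rule lipschitz_on_continuous_on)
  show "B-lipschitz_on {0..1} u"
    using u_lipschitz B_nonneg by (intro lipschitz_onI) (auto simp: dist_real_def)
qed

lemma hstar_min: "\<exists>a\<in>{0..1}. hstar h = h a a \<and> (\<forall>t\<in>{0..1}. h a a \<le> h t t)"
proof -
  obtain a where a: "a \<in> {0..1}" "\<forall>t\<in>{0..1}. h a a \<le> h t t"
    using continuous_attains_inf[OF compact_Icc _ continuous_on_diagonal[OF h_continuous]] by auto
  moreover have "hstar h = h a a"
    unfolding hstar_def by (rule cInf_eq_minimum) (use a in auto)
  ultimately show ?thesis by blast
qed

lemma hstar_le: "t \<in> {0..1} \<Longrightarrow> hstar h \<le> h t t"
  using hstar_min by force

definition defect :: "real \<Rightarrow> real \<Rightarrow> real" where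
  "defect a b = h b b - hstar h + c / 2 * (a - b)\<^sup>2"

definition cost :: "real \<Rightarrow> real \<Rightarrow> real" where
  "cost a b = h a b - hstar h + u a - u b"

lemma defect_le_cost: "a \<in> {0..1} \<Longrightarrow> b \<in> {0..1} \<Longrightarrow> defect a b \<le> cost a b"
  using subaction[of a b] by (simp add: defect_def cost_def)

lemma defect_nonneg: "b \<in> {0..1} \<Longrightarrow> 0 \<le> defect a b"
  using hstar_le[of b] c_pos by (simp add: defect_def)

lemma cost_nonneg: "a \<in> {0..1} \<Longrightarrow> b \<in> {0..1} \<Longrightarrow> 0 \<le> cost a b"
  using defect_le_cost defect_nonneg order_trans by blast

lemma defect_eq_0_iff:
  assumes "b \<in> {0..1}"
  shows "defect a b = 0 \<longleftrightarrow> a = b \<and> b \<in> mh h"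
proof -
  have "0 \<le> h b b - hstar h" "0 \<le> c / 2 * (a - b)\<^sup>2"
    using hstar_le[OF assms] c_pos by simp_all
  then show ?thesis
    using assms c_pos by (auto simp: defect_def mh_def add_nonneg_eq_0_iff)
qed

lemma defect_continuous: "continuous_on ({0..1} \<times> {0..1}) (case_prod defect)"
proof -
  have "continuous_on ({0..1} \<times> {0..1}) (\<lambda>p. case_prod h (snd p, snd p))"
    by (rule continuous_on_compose2[OF h_continuous]) (auto intro!: continuous_intros)
  then show ?thesis
    unfolding defect_def case_prod_unfold by (auto intro!: continuous_intros)
qed

lemma cost_continuous: "continuous_on ({0..1} \<times> {0..1}) (case_prod cost)"
proof -
  have "continuous_on ({0..1} \<times> {0..1}) (\<lambda>p. u (fst p))"
    "continuous_on ({0..1} \<times> {0..1}) (\<lambda>p. u (snd p))"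
    by (auto intro!: continuous_on_compose2[OF u_continuous] continuous_intros)
  with h_continuous show ?thesis
    unfolding cost_def case_prod_unfold by (intro continuous_intros)
qed

lemma pint_minus_hstar:
  assumes M: "invariant_prob M"
  shows "pint \<phi> M - hstar h = (\<integral>x. pair_obs cost 0 x \<partial>M)"
proof -
  interpret prob_space M using M by (simp add: invariant_prob_def)
  have sets: "sets M = sets borel" using M by (simp add: invariant_prob_def)
  let ?u\<^sub>1 = "\<lambda>a b. u a" and ?u\<^sub>2 = "\<lambda>a b. u b"
  have u\<^sub>1: "continuous_on ({0..1} \<times> {0..1}) (case_prod ?u\<^sub>1)"
    and u\<^sub>2: "continuous_on ({0..1} \<times> {0..1}) (case_prod ?u\<^sub>2)"
    by (auto simp: case_prod_unfold intro!: continuous_on_compose2[OF u_continuous] continuous_intros)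
  have int: "integrable M (pair_obs f 0)" if "continuous_on ({0..1} \<times> {0..1}) (case_prod f)" for f
    by (rule integrable_pair_obs[OF that finite_measure_axioms sets])
  have "pair_obs cost 0 x = pair_obs h 0 x - hstar h + pair_obs ?u\<^sub>1 0 x - pair_obs ?u\<^sub>2 0 x" for x
    by (simp add: pair_obs_def cost_def)
  then have "(\<integral>x. pair_obs cost 0 x \<partial>M) =
      (\<integral>x. pair_obs h 0 x \<partial>M) - hstar h + (\<integral>x. pair_obs ?u\<^sub>1 0 x \<partial>M) - (\<integral>x. pair_obs ?u\<^sub>2 0 x \<partial>M)"
    using int[OF h_continuous] int[OF u\<^sub>1] int[OF u\<^sub>2] prob_space by simp
  moreover have "(\<integral>x. pair_obs ?u\<^sub>2 0 x \<partial>M) = (\<integral>x. pair_obs ?u\<^sub>1 0 x \<partial>M)"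
    using invariant_prob_integral_pair_obs[OF M u\<^sub>1, of 1] by (simp add: pair_obs_def)
  ultimately show ?thesis
    using pint_eq_integral_pair_obs[OF M h_continuous] by simp
qed

lemma hstar_le_pint:
  assumes M: "invariant_prob M"
  shows "hstar h \<le> pint \<phi> M"
proof -
  have "AE x in M. 0 \<le> pair_obs cost 0 x"
    using invariant_prob_AE_Xs[OF M]
    by eventually_elim (use Xs_coordinate in \<open>simp add: pair_obs_Xs cost_nonneg\<close>)
  then show ?thesis
    using integral_nonneg_AE pint_minus_hstar[OF M] by fastforce
qed

lemma alpha_eq_hstar: "alpha \<phi> = hstar h"
  unfolding alpha_def
proof (rule cInf_eq_minimum)
  obtain a where a: "a \<in> {0..1}" "hstar h = h a a" using hstar_min by blast
  then show "hstar h \<in> {pint \<phi> M |M. invariant_prob M}"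
    using invariant_prob_return_const[OF a(1)] pint_return_const[OF a(1) h_continuous] by force
qed (blast intro: hstar_le_pint)

lemma minimizing_integral_defect:
  assumes "minimizing \<phi> M"
  shows "(\<integral>x. pair_obs defect k x \<partial>M) = 0"
proof -
  have M: "invariant_prob M" using assms by (simp add: minimizing_def)
  interpret prob_space M using M by (simp add: invariant_prob_def)
  have sets: "sets M = sets borel" using M by (simp add: invariant_prob_def)
  have on_Xs: "AE x in M. 0 \<le> pair_obs defect 0 x \<and> pair_obs defect 0 x \<le> pair_obs cost 0 x"
    using invariant_prob_AE_Xs[OF M]
    by eventually_elim (use Xs_coordinate in \<open>simp add: pair_obs_Xs defect_nonneg defect_le_cost\<close>)
  have "(\<integral>x. pair_obs cost 0 x \<partial>M) = 0"
    using assms pint_minus_hstar[OF M] alpha_eq_hstar unfolding minimizing_def by linarith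
  moreover have "(\<integral>x. pair_obs defect 0 x \<partial>M) \<le> (\<integral>x. pair_obs cost 0 x \<partial>M)"
    using on_Xs
    by (intro integral_mono_AE integrable_pair_obs[OF defect_continuous finite_measure_axioms sets]
        integrable_pair_obs[OF cost_continuous finite_measure_axioms sets]) auto
  moreover have "0 \<le> (\<integral>x. pair_obs defect 0 x \<partial>M)"
    using on_Xs by (intro integral_nonneg_AE) auto
  ultimately show ?thesis
    using invariant_prob_integral_pair_obs[OF M defect_continuous, of k] by simp
qed

lemma supp_minimizing_defect:
  assumes M: "minimizing \<phi> M" and x: "x \<in> supp M"
  shows "defect (x k) (x (Suc k)) = 0"
proof -
  have inv: "invariant_prob M" using M by (simp add: minimizing_def)
  interpret prob_space M using inv by (simp add: invariant_prob_def)
  have sets: "sets M = sets borel" using inv by (simp add: invariant_prob_def)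
  have "x \<in> Xs" using x by (simp add: supp_def)
  have "AE z in M. pair_obs defect k z = 0"
  proof -
    have "AE z in M. 0 \<le> pair_obs defect k z"
      using invariant_prob_AE_Xs[OF inv]
      by eventually_elim (use Xs_coordinate in \<open>simp add: pair_obs_Xs defect_nonneg\<close>)
    then show ?thesis
      using integral_nonneg_eq_0_iff_AE[OF integrable_pair_obs[OF defect_continuous finite_measure_axioms sets]]
        minimizing_integral_defect[OF M] by blast
  qed
  moreover have "\<exists>\<delta>>0. \<forall>z\<in>Xs. dX x z < \<delta> \<longrightarrow> \<bar>pair_obs defect k z - pair_obs defect k x\<bar> < e"
    if "0 < e" for e
    using continuous_on_square_dX[OF defect_continuous \<open>x \<in> Xs\<close> that] by (simp add: pair_obs_Xs \<open>x \<in> Xs\<close>)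
  ultimately have "pair_obs defect k x = 0"
    using AE_zero_on_supp[OF sets _ x] by blast
  then show ?thesis by (simp add: pair_obs_Xs \<open>x \<in> Xs\<close>)
qed

lemma defect_zero_prefix:
  assumes x: "x \<in> Xs" and zero: "\<forall>j<k. defect (x j) (x (Suc j)) = 0" and "j \<le> k"
  shows "x j = x 0"
  using \<open>j \<le> k\<close>
proof (induction j)
  case (Suc j)
  then have "x j = x (Suc j)"
    using zero defect_eq_0_iff[OF Xs_coordinate[OF x]] by simp
  with Suc show ?case by simp
qed simp

lemma defect_zero_imp_const:
  assumes x: "x \<in> Xs" and zero: "\<And>k. defect (x k) (x (Suc k)) = 0"
  shows "x \<in> (\<lambda>a. \<lambda>_. a) ` mh h"
proof -
  have "x = (\<lambda>_. x 0)"
    using defect_zero_prefix[OF x _ order_refl] zero by blast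
  moreover have "x 0 \<in> mh h"
    using zero[of 0] defect_eq_0_iff[OF Xs_coordinate[OF x]] by simp
  ultimately show ?thesis by blast
qed

theorem Mather_eq: "Mather \<phi> = (\<lambda>a. \<lambda>_. a) ` mh h"
proof
  show "Mather \<phi> \<subseteq> (\<lambda>a. \<lambda>_. a) ` mh h"
  proof
    fix x assume "x \<in> Mather \<phi>"
    then obtain M where "minimizing \<phi> M" "x \<in> supp M" by (auto simp: Mather_def)
    then show "x \<in> (\<lambda>a. \<lambda>_. a) ` mh h"
      by (intro defect_zero_imp_const supp_minimizing_defect) (auto simp: supp_def)
  qed
  show "(\<lambda>a. \<lambda>_. a) ` mh h \<subseteq> Mather \<phi>"
  proof clarify
    fix a assume "a \<in> mh h"
    then have a: "a \<in> {0..1}" "h a a = hstar h" by (auto simp: mh_def)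
    then have "minimizing \<phi> (return borel (\<lambda>_. a))"
      using invariant_prob_return_const pint_return_const[OF _ h_continuous] alpha_eq_hstar
      by (simp add: minimizing_def)
    moreover have "(\<lambda>_. a) \<in> supp (return borel (\<lambda>_. a))"
      using a by (simp add: supp_return const_Xs_iff)
    ultimately show "(\<lambda>_. a) \<in> Mather \<phi>"
      by (auto simp: Mather_def)
  qed
qed

lemma action_telescope:
  "(\<Sum>i<n. \<phi> ((shift ^^ i) z) - hstar h) = (\<Sum>i<n. cost (z i) (z (Suc i))) + u (z n) - u (z 0)"
  by (induction n) (auto simp: funpow_shift_apply cost_def)

lemma Seps_lower_bound:
  assumes x: "x \<in> Xs"
    and r: "\<And>n z. 1 \<le> n \<Longrightarrow> z \<in> Bset x x n e \<Longrightarrow> r \<le> (\<Sum>i<n. cost (z i) (z (Suc i)))"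
  shows "ereal (r - 4 * B * e) \<le> Seps \<phi> x x e"
  unfolding Seps_def alpha_eq_hstar
proof (rule Inf_greatest, clarify)
  fix n z assume n: "1 \<le> n" and z: "z \<in> Bset x x n e"
  have "z \<in> Xs" "\<bar>z 0 - x 0\<bar> < 2 * e" "\<bar>z n - x 0\<bar> < 2 * e"
    using Bset_coordinates(1)[OF x x z] Bset_coordinates(2,3)[OF x x z, of 0] by simp_all
  then have "\<bar>u (z n) - u (z 0)\<bar> \<le> B * \<bar>z n - z 0\<bar>" "\<bar>z n - z 0\<bar> \<le> 4 * e"
    using u_lipschitz Xs_coordinate by auto
  then have "\<bar>u (z n) - u (z 0)\<bar> \<le> B * (4 * e)"
    using B_nonneg by (meson mult_left_mono order_trans)
  then show "ereal (r - 4 * B * e) \<le> ereal (\<Sum>i<n. \<phi> ((shift ^^ i) z) - hstar h)"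
    using r[OF n z] action_telescope[of z n] by simp
qed

lemma const_in_Aubry:
  assumes "a \<in> mh h"
  shows "(\<lambda>_. a) \<in> Aubry \<phi>"
proof -
  have a: "a \<in> {0..1}" "h a a = hstar h" using assms by (auto simp: mh_def)
  define x :: "nat \<Rightarrow> real" where "x = (\<lambda>_. a)"
  have x: "x \<in> Xs" using a by (simp add: x_def const_Xs_iff)
  have upper: "Seps \<phi> x x e \<le> 0" if "0 < e" for e
    unfolding Seps_def alpha_eq_hstar
  proof (rule Inf_lower2)
    show "ereal (\<Sum>i<1. \<phi> ((shift ^^ i) x) - hstar h) \<in>
        {ereal (\<Sum>i<n. \<phi> ((shift ^^ i) z) - hstar h) |n z. 1 \<le> n \<and> z \<in> Bset x x n e}"
      using x \<open>0 < e\<close> by (intro CollectI exI[of _ 1] exI[of _ x]) (simp add: Bset_def x_def)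
  qed (simp add: x_def a)
  have lower: "ereal (0 - 4 * B * e) \<le> Seps \<phi> x x e" for e
    using Bset_coordinates(1)[OF x x] cost_nonneg Xs_coordinate
    by (intro Seps_lower_bound[OF x] sum_nonneg) blast
  have "((\<lambda>e. Seps \<phi> x x e) \<longlongrightarrow> 0) (at_right 0)"
  proof (rule tendsto_sandwich)
    show "\<forall>\<^sub>F e in at_right 0. ereal (0 - 4 * B * e) \<le> Seps \<phi> x x e"
      using lower by simp
    show "\<forall>\<^sub>F e in at_right 0. Seps \<phi> x x e \<le> 0"
      using eventually_at_right_less[of "0 :: real"] by eventually_elim (rule upper)
    have "((\<lambda>e. 0 - 4 * B * e) \<longlongrightarrow> 0 - 4 * B * 0) (at_right (0 :: real))"
      by (intro tendsto_intros)
    then show "((\<lambda>e. ereal (0 - 4 * B * e)) \<longlongrightarrow> 0) (at_right 0)"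
      by (simp add: zero_ereal_def)
  qed simp
  then have "Mane \<phi> x x = 0"
    using tendsto_unique[OF trivial_limit_at_right_real Mane_tendsto] by blast
  then show ?thesis using x by (simp add: Aubry_def x_def)
qed

lemma first_positive_defect:
  assumes x: "x \<in> Xs" and "defect (x k) (x (Suc k)) \<noteq> 0"
  obtains k\<^sub>0 where "\<forall>j<k\<^sub>0. defect (x j) (x (Suc j)) = 0"
    and "0 < defect (x k\<^sub>0) (x (Suc k\<^sub>0))"
proof
  define k\<^sub>0 where "k\<^sub>0 = (LEAST k. defect (x k) (x (Suc k)) \<noteq> 0)"
  show "\<forall>j<k\<^sub>0. defect (x j) (x (Suc j)) = 0"
    using not_less_Least unfolding k\<^sub>0_def by blast
  have "defect (x k\<^sub>0) (x (Suc k\<^sub>0)) \<noteq> 0"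
    unfolding k\<^sub>0_def by (rule LeastI) fact
  then show "0 < defect (x k\<^sub>0) (x (Suc k\<^sub>0))"
    using defect_nonneg[OF Xs_coordinate[OF x]] by (simp add: order_less_le)
qed

lemma first_positive_defect_jump:
  assumes x: "x \<in> Xs" and before: "\<forall>j<k. defect (x j) (x (Suc j)) = 0"
    and q: "0 < defect (x k) (x (Suc k))" and "0 < k"
  shows "x (Suc k) \<noteq> x k"
proof
  assume jump: "x (Suc k) = x k"
  have "k - 1 < k"
    using \<open>0 < k\<close> by simp
  with before have "defect (x (k - 1)) (x (Suc (k - 1))) = 0"
    by blast
  then have "defect (x (k - 1)) (x k) = 0"
    using \<open>0 < k\<close> by simp
  then have "h (x k) (x k) = hstar h"
    using defect_eq_0_iff[OF Xs_coordinate[OF x]] by (simp add: mh_def)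
  with q jump show False
    by (simp add: defect_def)
qed

lemma eventually_no_short_return:
  assumes x: "x \<in> Xs" and before: "\<forall>j<k. defect (x j) (x (Suc j)) = 0"
    and q: "0 < defect (x k) (x (Suc k))"
  shows "\<forall>\<^sub>F e in at_right 0. \<forall>n z. 1 \<le> n \<longrightarrow> z \<in> Bset x x n e \<longrightarrow> k < n"
proof (cases "k = 0")
  case False
  define d where "d = \<bar>x (Suc k) - x k\<bar>"
  have "0 < d / 2 ^ (k + 3)"
    using first_positive_defect_jump[OF x before q] False by (simp add: d_def)
  then have "\<forall>\<^sub>F e in at_right 0. e \<in> {0<..<d / 2 ^ (k + 3)}"
    by (rule eventually_at_right_real)
  then show ?thesis
  proof eventually_elim
    case (elim e)
    have const: "x j = x k" if "j \<le> k" for j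
      using defect_zero_prefix[OF x before that] defect_zero_prefix[OF x before order_refl] by simp
    have "\<not> d < 2 ^ (k + 3) * e"
      using elim by (simp add: pos_less_divide_eq mult.commute)
    show ?case
    proof (intro allI impI)
      fix n z assume "1 \<le> n" "z \<in> Bset x x n e"
      show "k < n"
      proof (rule ccontr)
        assume "\<not> k < n"
        then have "d < 2 ^ (k + 3) * e"
          using Bset_short_return[OF x const \<open>1 \<le> n\<close> _ \<open>z \<in> Bset x x n e\<close>] by (simp add: d_def)
        with \<open>\<not> d < 2 ^ (k + 3) * e\<close> show False by simp
      qed
    qed
  qed
qed simp

lemma eventually_defect_near:
  assumes x: "x \<in> Xs" and q: "0 < defect (x k) (x (Suc k))"
  shows "\<forall>\<^sub>F e in at_right 0. \<forall>n z. z \<in> Bset x x n e \<longrightarrow>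
    defect (x k) (x (Suc k)) / 2 < defect (z k) (z (Suc k))"
proof -
  obtain \<delta> where "0 < \<delta>" and near: "\<forall>z\<in>Xs. dX x z < \<delta> \<longrightarrow>
      \<bar>defect (z k) (z (Suc k)) - defect (x k) (x (Suc k))\<bar> < defect (x k) (x (Suc k)) / 2"
    using continuous_on_square_dX[OF defect_continuous x] q by (meson half_gt_zero)
  show ?thesis
    using eventually_at_right_real[OF \<open>0 < \<delta>\<close>]
  proof eventually_elim
    case (elim e)
    show ?case
    proof (intro allI impI)
      fix n z assume "z \<in> Bset x x n e"
      then have "z \<in> Xs" "dX x z < \<delta>"
        using elim by (auto simp: Bset_def)
      then have "\<bar>defect (z k) (z (Suc k)) - defect (x k) (x (Suc k))\<bar> < defect (x k) (x (Suc k)) / 2"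
        using near by blast
      then show "defect (x k) (x (Suc k)) / 2 < defect (z k) (z (Suc k))"
        unfolding abs_less_iff by linarith
    qed
  qed
qed

lemma defect_le_cost_sum:
  assumes "z \<in> Xs" "k < n"
  shows "defect (z k) (z (Suc k)) \<le> (\<Sum>i<n. cost (z i) (z (Suc i)))"
proof -
  have "defect (z k) (z (Suc k)) \<le> cost (z k) (z (Suc k))"
    using defect_le_cost Xs_coordinate[OF \<open>z \<in> Xs\<close>] by blast
  also have "\<dots> \<le> (\<Sum>i<n. cost (z i) (z (Suc i)))"
    using assms cost_nonneg Xs_coordinate by (intro member_le_sum) auto
  finally show ?thesis .
qed

lemma Aubry_defect_zero:
  assumes "x \<in> Aubry \<phi>"
  shows "defect (x k) (x (Suc k)) = 0"
proof (rule ccontr)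
  have x: "x \<in> Xs" and "Mane \<phi> x x = 0" using assms by (auto simp: Aubry_def)
  assume "defect (x k) (x (Suc k)) \<noteq> 0"
  then obtain k\<^sub>0 where before: "\<forall>j<k\<^sub>0. defect (x j) (x (Suc j)) = 0"
    and pos: "0 < defect (x k\<^sub>0) (x (Suc k\<^sub>0))"
    using first_positive_defect[OF x] by blast
  define q where "q = defect (x k\<^sub>0) (x (Suc k\<^sub>0))"
  have "0 < q / (16 * (B + 1))"
    using pos B_nonneg by (simp add: q_def)
  then have "\<forall>\<^sub>F e in at_right 0. e \<in> {0<..<q / (16 * (B + 1))}"
    by (rule eventually_at_right_real)
  \<comment> \<open>Returning segments are longer than the first positive defect's index, so they pay about it.\<close>
  with eventually_no_short_return[OF x before pos] eventually_defect_near[OF x pos]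
  have "\<forall>\<^sub>F e in at_right 0. ereal (q / 4) \<le> Seps \<phi> x x e"
  proof eventually_elim
    case (elim e)
    have "ereal (q / 2 - 4 * B * e) \<le> Seps \<phi> x x e"
    proof (rule Seps_lower_bound[OF x])
      fix n z assume "1 \<le> n" and z: "z \<in> Bset x x n e"
      then have "k\<^sub>0 < n" "q / 2 < defect (z k\<^sub>0) (z (Suc k\<^sub>0))"
        using elim unfolding q_def by blast+
      moreover have "defect (z k\<^sub>0) (z (Suc k\<^sub>0)) \<le> (\<Sum>i<n. cost (z i) (z (Suc i)))"
        by (rule defect_le_cost_sum[OF Bset_coordinates(1)[OF x x z] \<open>k\<^sub>0 < n\<close>])
      ultimately show "q / 2 \<le> (\<Sum>i<n. cost (z i) (z (Suc i)))"
        by linarith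
    qed
    moreover have "16 * (B + 1) * e < q" "4 * B * e \<le> 4 * (B + 1) * e"
      using elim B_nonneg by (simp_all add: field_simps)
    then have "ereal (q / 4) \<le> ereal (q / 2 - 4 * B * e)"
      using elim by (simp add: algebra_simps)
    ultimately show ?case by (rule order_trans[rotated])
  qed
  then have "ereal (q / 4) \<le> Mane \<phi> x x"
    using tendsto_lowerbound[OF Mane_tendsto] trivial_limit_at_right_real by blast
  with \<open>Mane \<phi> x x = 0\<close> pos show False by (simp add: q_def)
qed

theorem Aubry_eq: "Aubry \<phi> = (\<lambda>a. \<lambda>_. a) ` mh h"
proof
  show "Aubry \<phi> \<subseteq> (\<lambda>a. \<lambda>_. a) ` mh h"
  proof
    fix x assume "x \<in> Aubry \<phi>"
    then have "x \<in> Xs" by (simp add: Aubry_def)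
    then show "x \<in> (\<lambda>a. \<lambda>_. a) ` mh h"
      by (rule defect_zero_imp_const) (rule Aubry_defect_zero[OF \<open>x \<in> Aubry \<phi>\<close>])
  qed
  show "(\<lambda>a. \<lambda>_. a) ` mh h \<subseteq> Aubry \<phi>"
    using const_in_Aubry by blast
qed

end

lemma C2_twist_strict_subaction:
  assumes C2: "C2_square h d1 d2 d11 d12 d21 d22"
    and twist: "\<forall>x\<in>{0..1}. \<forall>y\<in>{0..1}. d12 x y < 0"
  shows "\<exists>u c B. strict_subaction h u c B"
proof -
  have hd1: "\<And>x y. x \<in> {0..1} \<Longrightarrow> y \<in> {0..1} \<Longrightarrow>
      ((\<lambda>t. h t y) has_real_derivative d1 x y) (at x within {0..1})"
    and d1d2: "\<And>x y. x \<in> {0..1} \<Longrightarrow> y \<in> {0..1} \<Longrightarrow>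
      ((\<lambda>t. d1 x t) has_real_derivative d12 x y) (at y within {0..1})"
    and h_continuous: "continuous_on ({0..1} \<times> {0..1}) (case_prod h)"
    and d1_continuous: "continuous_on ({0..1} \<times> {0..1}) (case_prod d1)"
    and d12_continuous: "continuous_on ({0..1} \<times> {0..1}) (case_prod d12)"
    using C2 unfolding C2_square_def by blast+
  obtain p where "p \<in> {0..1} \<times> {0..1}"
    and p: "\<And>p'. p' \<in> {0..1} \<times> {0..1} \<Longrightarrow> case_prod d12 p' \<le> case_prod d12 p"
    using continuous_attains_sup[OF compact_Times[OF compact_Icc compact_Icc] _ d12_continuous]
    by auto
  define c where "c = - case_prod d12 p"
  have "0 < c"
    using \<open>p \<in> {0..1} \<times> {0..1}\<close> twist by (auto simp: c_def)
  have d12_le: "d12 x y \<le> - c" if "x \<in> {0..1}" "y \<in> {0..1}" for x y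
    using p[of "(x, y)"] that by (simp add: c_def)
  have diag: "continuous_on {0..1} (\<lambda>t. d1 t t)"
    by (rule continuous_on_diagonal[OF d1_continuous])
  define u where "u t = - integral {0..t} (\<lambda>s. d1 s s)" for t
  have du: "(u has_real_derivative - d1 t t) (at t within {0..1})" if "t \<in> {0..1}" for t
    unfolding u_def[abs_def] by (rule DERIV_minus[OF integral_has_real_derivative[OF diag that]])
  obtain B where B: "\<forall>t\<in>{0..1}. \<bar>d1 t t\<bar> \<le> B"
    using compact_imp_bounded[OF compact_continuous_image[OF diag compact_Icc]]
    by (auto simp: bounded_iff)
  have "strict_subaction h u c B"
  proof
    show "\<bar>u a - u b\<bar> \<le> B * \<bar>a - b\<bar>" if "a \<in> {0..1}" "b \<in> {0..1}" for a b
      using field_differentiable_bound[OF convex_real_interval(5) du, of B a b] B that by simp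
    show "c / 2 * (x - y)\<^sup>2 \<le> h x y - h y y + u x - u y" if "x \<in> {0..1}" "y \<in> {0..1}" for x y
      by (rule twist_subaction_inequality[OF is_interval_cc hd1 d1d2 d12_le du that])
  qed fact+
  then show ?thesis by blast
qed

theorem theorem1:
  fixes h d1 d2 d11 d12 d21 d22 :: "real \<Rightarrow> real \<Rightarrow> real"
  assumes "C2_square h d1 d2 d11 d12 d21 d22"
    and "\<forall>x\<in>{0..1}. \<forall>y\<in>{0..1}. d12 x y < 0"
  shows "Mather (\<lambda>x. h (x 0) (x 1)) = Aubry (\<lambda>x. h (x 0) (x 1)) \<and>
         Aubry (\<lambda>x. h (x 0) (x 1)) = (\<lambda>a. (\<lambda>_::nat. a)) ` mh h"
proof -
  obtain u c B where "strict_subaction h u c B"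
    using C2_twist_strict_subaction[OF assms] by blast
  then interpret strict_subaction h u c B .
  show ?thesis using Mather_eq Aubry_eq by simp
qed

end
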